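(* The WKD-IBE construction described in the context is history-independent: for every pattern $S$ and any two well-formed keys $k_1$ (for pattern $P_1$) and $k_2$ (for pattern $P_2$) in the same system (same $\mathsf{Params}$ and $\alpha$) such that $P_1$ matches $S$ and $P_2$ matches $S$, the distributions $\{\mathbf{KeyDer}(k_1,S)\}$ and $\{\mathbf{KeyDer}(k_2,S)\}$ over the internal randomness of $\mathbf{KeyDer}$ are identical. Here, if $k_1$ (resp. $k_2$) is the master key, $P_1$ (resp. $P_2$) is the pattern with all slots equal to $\bot$.
   Context: Patterns: for a prime $p$ and integer $\ell$, a pattern is $S\in(\mathbb{Z}_p^*\cup\{\bot\})^\ell$; $\mathrm{fixed}(S)=\{(i,S(i)):S(i)\neq\bot\}$, $\mathrm{free}(S)=\{i:S(i)=\bot\}$; $P$ matches $S$ if for all $i$, $P(i)=\bot$ or $P(i)=S(i)$. Construction. Let $\mathbb{G}_1,\mathbb{G}_2,\mathbb{G}_T$ be cyclic groups of prime order $p$ with a bilinear map $e:\mathbb{G}_1\times\mathbb{G}_2\to\mathbb{G}_T$. $\mathbf{Setup}(1^\ell)$: choose $g\in\mathbb{G}_2$ and $g_2,g_3,h_1,\dots,h_\ell,h_s\in\mathbb{G}_1$ uniformly, $\alpha\in\mathbb{Z}_p$ uniformly, set $g_1=g^\alpha$; $\mathsf{Params}=(g,g_1,g_2,g_3,h_1,\dots,h_\ell,h_s)$ and $\mathsf{MasterKey}=g_2^\alpha$. Here $s$ is a special index, distinct from $1,\dots,\ell$, never fixed in a pattern. For a pattern $S$ write $Q_S=g_3\prod_{(i,a_i)\in\mathrm{fixed}(S)}h_i^{a_i}$.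 Non-master keys are triples $(k_0,k_1,B)$ with $k_0\in\mathbb{G}_1$, $k_1\in\mathbb{G}_2$, $B$ a set of pairs $(j,b_j)$ with $b_j\in\mathbb{G}_1$. $\mathbf{KeyDer}$ from the master key to pattern $S$: sample $r\in\mathbb{Z}_p$ uniformly and output $(g_2^\alpha Q_S^r,\ g^r,\ \{(j,h_j^r)\}_{j\in\mathrm{free}(S)\cup\{s\}})$. $\mathbf{KeyDer}$ from a key $(k_0,k_1,B)$, $B=\{(i,b_i)\}$, to pattern $S$: sample $t\in\mathbb{Z}_p$ uniformly and output $\big(k_0\,Q_S^t\prod_{(i,a_i)\in\mathrm{fixed}(S),\,(i,b_i)\in B}b_i^{a_i},\ g^t k_1,\ \{(j,h_j^t b_j)\}_{j\in\mathrm{free}(S)\cup\{s\}}\big)$. A non-master key for pattern $P$ is well-formed if it equals $(g_2^\alpha Q_P^{r_0},\ g^{r_0},\ \{(j,h_j^{r_0})\}_{j\in\mathrm{free}(P)\cup\{s\}})$ for some $r_0\in\mathbb{Z}_p$; the master key $g_2^\alpha$ is also regarded as well-formed. *)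

theory Defs
  imports "HOL-Algebra.Coset" "HOL-Algebra.FiniteProduct" "HOL-Probability.Probability_Mass_Function"
begin

text \<open>Indices of key components: the pattern slots (0-based) and the special index s.\<close>
datatype idx = Slot nat | Spec

text \<open>A pattern of length l: a list of l entries, None standing for the wildcard bot,
  Some a for a fixed value a in Z_p^* (represented by a natural number 0 < a < p).\<close>
type_synonym pattern = "nat option list"

definition is_pattern :: "nat \<Rightarrow> nat \<Rightarrow> pattern \<Rightarrow> bool" where
  "is_pattern p l S \<longleftrightarrow> length S = l \<and> (\<forall>i<length S. \<forall>a. S ! i = Some a \<longrightarrow> 0 < a \<and> a < p)"

definition fixed_idx :: "pattern \<Rightarrow> nat set" where
  "fixed_idx S = {i. i < length S \<and> S ! i \<noteq> None}"

definition free_set :: "pattern \<Rightarrow> idx set" where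
  "free_set S = {Slot i | i. i < length S \<and> S ! i = None}"

definition matches :: "pattern \<Rightarrow> pattern \<Rightarrow> bool" where
  "matches P S \<longleftrightarrow> length P = length S \<and> (\<forall>i<length P. P ! i = None \<or> P ! i = S ! i)"

record ('a, 'b) params =
  pg  :: 'b
  pg1 :: 'b
  pg2 :: 'a
  pg3 :: 'a
  ph  :: "idx \<Rightarrow> 'a"   \<comment> \<open>h_1..h_l at Slot 0..Slot (l-1), h_s at Spec\<close>

text \<open>Keys: the master key g2^alpha, or a triple (k0, k1, B) where B is a set of pairs
  (j, b_j), represented as a partial map from indices to group elements.\<close>
datatype ('a, 'b) key = Master 'a | Key 'a 'b "idx \<Rightarrow> 'a option"

definition QS :: "('a, 'c) monoid_scheme \<Rightarrow> ('a, 'b) params \<Rightarrow> pattern \<Rightarrow> 'a" where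
  "QS G1 prm S = pg3 prm \<otimes>\<^bsub>G1\<^esub>
     finprod G1 (\<lambda>i. ph prm (Slot i) [^]\<^bsub>G1\<^esub> the (S ! i)) (fixed_idx S)"

definition KeyDer ::
  "nat \<Rightarrow> ('a, 'c) monoid_scheme \<Rightarrow> ('b, 'd) monoid_scheme \<Rightarrow> ('a, 'b) params
     \<Rightarrow> ('a, 'b) key \<Rightarrow> pattern \<Rightarrow> ('a, 'b) key pmf" where
  "KeyDer p G1 G2 prm k S = (case k of
     Master m \<Rightarrow> map_pmf (\<lambda>r::nat.
        Key (m \<otimes>\<^bsub>G1\<^esub> (QS G1 prm S [^]\<^bsub>G1\<^esub> r))
            (pg prm [^]\<^bsub>G2\<^esub> r)
            (\<lambda>j. if j \<in> free_set S \<union> {Spec} then Some (ph prm j [^]\<^bsub>G1\<^esub> r) else None))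
        (pmf_of_set {..<p})
   | Key k0 k1 B \<Rightarrow> map_pmf (\<lambda>t::nat.
        Key (k0 \<otimes>\<^bsub>G1\<^esub> (QS G1 prm S [^]\<^bsub>G1\<^esub> t) \<otimes>\<^bsub>G1\<^esub>
               finprod G1 (\<lambda>i. the (B (Slot i)) [^]\<^bsub>G1\<^esub> the (S ! i))
                 {i \<in> fixed_idx S. B (Slot i) \<noteq> None})
            (pg prm [^]\<^bsub>G2\<^esub> t \<otimes>\<^bsub>G2\<^esub> k1)
            (\<lambda>j. if j \<in> free_set S \<union> {Spec}
                 then Some (ph prm j [^]\<^bsub>G1\<^esub> t \<otimes>\<^bsub>G1\<^esub> the (B j)) else None))
        (pmf_of_set {..<p}))"

definition well_formed ::
  "nat \<Rightarrow> ('a, 'c) monoid_scheme \<Rightarrow> ('b, 'd) monoid_scheme \<Rightarrow> ('a, 'b) params \<Rightarrow> nat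
     \<Rightarrow> ('a, 'b) key \<Rightarrow> pattern \<Rightarrow> bool" where
  "well_formed p G1 G2 prm \<alpha> k P \<longleftrightarrow>
     (k = Master (pg2 prm [^]\<^bsub>G1\<^esub> \<alpha>) \<and> (\<forall>i<length P. P ! i = None)) \<or>
     (\<exists>r0<p. k = Key (pg2 prm [^]\<^bsub>G1\<^esub> \<alpha> \<otimes>\<^bsub>G1\<^esub> (QS G1 prm P [^]\<^bsub>G1\<^esub> r0))
                     (pg prm [^]\<^bsub>G2\<^esub> r0)
                     (\<lambda>j. if j \<in> free_set P \<union> {Spec} then Some (ph prm j [^]\<^bsub>G1\<^esub> r0) else None))"

end

theory Submission
  imports Defs "HOL-Algebra.Multiplicative_Group" "HOL-Algebra.Elementary_Groups" "HOL-Number_Theory.Cong"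
begin

text \<open>A well-formed key for P with randomness r is exactly what the master key yields for P on
  randomness r. Deriving from it for a pattern S matched by P on randomness t gives the
  well-formed key for S with randomness t + r (mod p): the elements h_i^r stored for the
  slots that are free in P but fixed in S supply the factors missing from Q_P^r to make
  Q_S^r, and exponents may be read modulo the group order p. Since t + r is uniform
  on Z_p when t is, every well-formed key derives the same distribution as the master key.
  Commutativity of the group G1 comes for free, as groups of prime order are cyclic.\<close>

lemma bij_betw_add_mod:
  fixes n :: nat
  shows "bij_betw (\<lambda>t. (t + r) mod n) {..<n} {..<n}"
proof -
  have "inj_on (\<lambda>t. (t + r) mod n) {..<n}"
  proof (rule inj_onI)
    fix a b assume "a \<in> {..<n}" "b \<in> {..<n}" "(a + r) mod n = (b + r) mod n"
    then show "a = b"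
      using cong_add_rcancel_nat[of a r b n] by (simp add: cong_def)
  qed
  moreover have "(\<lambda>t. (t + r) mod n) ` {..<n} = {..<n}"
    using calculation by (intro endo_inj_surj) auto
  ultimately show ?thesis
    by (simp add: bij_betw_def)
qed

lemma (in group) pow_mod_order:
  assumes "x \<in> carrier G"
  shows "x [^] (n mod Coset.order G) = x [^] n"
proof -
  have "x [^] n = x [^] (Coset.order G * (n div Coset.order G) + n mod Coset.order G)"
    by simp
  also have "\<dots> = (x [^] Coset.order G) [^] (n div Coset.order G) \<otimes> x [^] (n mod Coset.order G)"
    using assms by (simp add: nat_pow_mult nat_pow_pow)
  also have "\<dots> = x [^] (n mod Coset.order G)"
    using assms by (simp add: pow_order_eq_1)
  finally show ?thesis
    by simp
qed

lemma (in group) prime_order_imp_cyclic: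
  assumes "prime (Coset.order G)"
  shows "cyclic_group G"
proof -
  have fin: "finite (carrier G)"
    using prime_gt_0_nat[OF assms] by (simp add: order_gt_0_iff_finite)
  have "card (carrier G) \<noteq> 1"
    using assms not_prime_1 unfolding Coset.order_def by metis
  then have "carrier G \<noteq> {\<one>}"
    by auto
  then obtain x where x: "x \<in> carrier G" "x \<noteq> \<one>"
    using one_closed by blast
  have "ord x dvd Coset.order G" "ord x \<noteq> 1"
    using ord_dvd_group_order[OF x(1)] ord_eq_1[OF x(1)] x(2) by auto
  then have "ord x = Coset.order G"
    using assms unfolding prime_nat_iff by blast
  then have "card (carrier (subgroup_generated G {x})) = card (carrier G)"
    using cyclic_order_is_ord[OF x(1)] by (simp add: Coset.order_def)
  then have "carrier (subgroup_generated G {x}) = carrier G"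
    using fin carrier_subgroup_generated_subset by (simp add: card_subset_eq)
  then show ?thesis
    unfolding cyclic_group using x(1) carrier_subgroup_generated_by_singleton[OF x(1)] by auto
qed

lemma (in comm_monoid) finprod_pow:
  assumes "finite A" "f \<in> A \<rightarrow> carrier G"
  shows "finprod G (\<lambda>i. f i [^] (n::nat)) A = finprod G f A [^] n"
  using assms
proof (induction A rule: finite_induct)
  case (insert a A)
  then have fa: "f a \<in> carrier G" and fA: "f \<in> A \<rightarrow> carrier G"
    by auto
  with insert show ?case
    by (simp add: Pi_iff nat_pow_distrib[OF fa finprod_closed[OF fA]])
qed simp

lemma finite_fixed_idx: "finite (fixed_idx S)"
  by (simp add: fixed_idx_def)

lemma matches_fixed_idx_subset: "matches P S \<Longrightarrow> fixed_idx P \<subseteq> fixed_idx S"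
  by (auto simp: matches_def fixed_idx_def)

lemma matches_free_set_subset: "matches P S \<Longrightarrow> free_set S \<subseteq> free_set P"
  by (auto simp: matches_def free_set_def)

lemma QS_matches:
  fixes G (structure)
  assumes "comm_monoid G" and "pg3 prm \<in> carrier G" and "\<And>j. ph prm j \<in> carrier G"
    and "matches P S"
  shows "QS G prm S =
    QS G prm P \<otimes> finprod G (\<lambda>i. ph prm (Slot i) [^] the (S ! i)) (fixed_idx S - fixed_idx P)"
proof -
  interpret comm_monoid G by fact
  define f where "f i = ph prm (Slot i) [^] the (S ! i)" for i
  have f_closed: "f \<in> A \<rightarrow> carrier G" for A
    using assms(3) by (simp add: f_def)
  have "finprod G (\<lambda>i. ph prm (Slot i) [^] the (P ! i)) (fixed_idx P) = finprod G f (fixed_idx P)"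
    using assms(4) f_closed by (intro finprod_cong') (auto simp: f_def matches_def fixed_idx_def)
  then have "QS G prm P = pg3 prm \<otimes> finprod G f (fixed_idx P)"
    by (simp add: QS_def)
  moreover have "finprod G f (fixed_idx S) =
      finprod G f (fixed_idx P) \<otimes> finprod G f (fixed_idx S - fixed_idx P)"
    using matches_fixed_idx_subset[OF assms(4)] f_closed finite_fixed_idx
    by (metis Diff_disjoint Diff_partition finite_Diff finprod_Un_disjoint)
  ultimately show ?thesis
    using assms(2) f_closed by (simp add: QS_def m_assoc flip: f_def)
qed

definition canonical_key ::
  "('a, 'c) monoid_scheme \<Rightarrow> ('b, 'd) monoid_scheme \<Rightarrow> ('a, 'b) params \<Rightarrow> nat
     \<Rightarrow> pattern \<Rightarrow> nat \<Rightarrow> ('a, 'b) key" where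
  "canonical_key G1 G2 prm \<alpha> S r =
     Key (pg2 prm [^]\<^bsub>G1\<^esub> \<alpha> \<otimes>\<^bsub>G1\<^esub> (QS G1 prm S [^]\<^bsub>G1\<^esub> r))
         (pg prm [^]\<^bsub>G2\<^esub> r)
         (\<lambda>j. if j \<in> free_set S \<union> {Spec} then Some (ph prm j [^]\<^bsub>G1\<^esub> r) else None)"

lemma KeyDer_Master:
  "KeyDer p G1 G2 prm (Master (pg2 prm [^]\<^bsub>G1\<^esub> \<alpha>)) S =
     map_pmf (canonical_key G1 G2 prm \<alpha> S) (pmf_of_set {..<p})"
  unfolding KeyDer_def canonical_key_def by simp

lemma well_formed_cases:
  assumes "well_formed p G1 G2 prm \<alpha> k P"
  obtains "k = Master (pg2 prm [^]\<^bsub>G1\<^esub> \<alpha>)" | r where "k = canonical_key G1 G2 prm \<alpha> P r"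
  using assms by (auto simp: well_formed_def canonical_key_def)

locale wkd_ibe_system =
  G1: comm_group G1 + G2: group G2
  for G1 :: "('a, 'c) monoid_scheme" (structure)
    and G2 :: "('b, 'd) monoid_scheme"
    and prm :: "('a, 'b) params"
    and p :: nat +
  assumes finite_G1: "finite (carrier G1)"
    and order_G1: "Coset.order G1 = p"
    and order_G2: "Coset.order G2 = p"
    and g_closed: "pg prm \<in> carrier G2"
    and g2_closed: "pg2 prm \<in> carrier G1"
    and g3_closed: "pg3 prm \<in> carrier G1"
    and h_closed: "ph prm j \<in> carrier G1"
begin

lemma p_pos: "0 < p"
  using finite_G1 order_G1 G1.order_gt_0_iff_finite by blast

lemma QS_closed: "QS G1 prm S \<in> carrier G1"
  using g3_closed h_closed by (simp add: QS_def Pi_iff)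

lemma QS_pow_matches:
  fixes r :: nat
  assumes "matches P S"
  shows "QS G1 prm P [^] r \<otimes>
           finprod G1 (\<lambda>i. (ph prm (Slot i) [^] r) [^] the (S ! i)) (fixed_idx S - fixed_idx P)
         = QS G1 prm S [^] r"
proof -
  define D where "D = finprod G1 (\<lambda>i. ph prm (Slot i) [^] the (S ! i)) (fixed_idx S - fixed_idx P)"
  have "finprod G1 (\<lambda>i. (ph prm (Slot i) [^] r) [^] the (S ! i)) (fixed_idx S - fixed_idx P)
      = finprod G1 (\<lambda>i. (ph prm (Slot i) [^] the (S ! i)) [^] r) (fixed_idx S - fixed_idx P)"
    using h_closed by (intro G1.finprod_cong') (auto simp: G1.nat_pow_pow mult.commute)
  also have "\<dots> = D [^] r"
    unfolding D_def using h_closed finite_fixed_idx by (intro G1.finprod_pow) auto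
  finally show ?thesis
    using QS_matches[OF G1.comm_monoid_axioms g3_closed h_closed assms] QS_closed h_closed
    by (simp add: D_def G1.nat_pow_distrib Pi_iff)
qed

lemma KeyDer_canonical_key_shift:
  assumes "matches P S"
  shows "KeyDer p G1 G2 prm (canonical_key G1 G2 prm \<alpha> P r) S =
    map_pmf (\<lambda>t. canonical_key G1 G2 prm \<alpha> S ((t + r) mod p)) (pmf_of_set {..<p})"
proof -
  define B where
    "B j = (if j \<in> free_set P \<union> {Spec} then Some (ph prm j [^] r) else None)" for j
  define E where
    "E = finprod G1 (\<lambda>i. (ph prm (Slot i) [^] r) [^] the (S ! i)) (fixed_idx S - fixed_idx P)"
  have E_closed: "E \<in> carrier G1"
    using h_closed by (simp add: E_def Pi_iff)
  have "{i \<in> fixed_idx S. B (Slot i) \<noteq> None} = fixed_idx S - fixed_idx P"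
    using assms by (auto simp: B_def fixed_idx_def free_set_def matches_def)
  then have delegated:
    "finprod G1 (\<lambda>i. the (B (Slot i)) [^] the (S ! i)) {i \<in> fixed_idx S. B (Slot i) \<noteq> None} = E"
    using assms h_closed
    unfolding E_def
    by (auto simp: B_def free_set_def fixed_idx_def matches_def intro!: G1.finprod_cong')
  have k0_eq: "pg2 prm [^] \<alpha> \<otimes> QS G1 prm P [^] r \<otimes> QS G1 prm S [^] t \<otimes>
        finprod G1 (\<lambda>i. the (B (Slot i)) [^] the (S ! i)) {i \<in> fixed_idx S. B (Slot i) \<noteq> None}
      = pg2 prm [^] \<alpha> \<otimes> QS G1 prm S [^] ((t + r) mod p)" for t
  proof -
    have "pg2 prm [^] \<alpha> \<otimes> QS G1 prm P [^] r \<otimes> QS G1 prm S [^] t \<otimes> E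
        = pg2 prm [^] \<alpha> \<otimes> ((QS G1 prm P [^] r \<otimes> E) \<otimes> QS G1 prm S [^] t)"
      using g2_closed QS_closed E_closed by (simp add: G1.m_ac)
    also have "\<dots> = pg2 prm [^] \<alpha> \<otimes> QS G1 prm S [^] (t + r)"
      using QS_closed by (simp add: E_def QS_pow_matches[OF assms] G1.nat_pow_mult add.commute)
    also have "\<dots> = pg2 prm [^] \<alpha> \<otimes> QS G1 prm S [^] ((t + r) mod p)"
      using G1.pow_mod_order[OF QS_closed] by (simp add: order_G1)
    finally show ?thesis
      unfolding delegated .
  qed
  have k1_eq: "pg prm [^]\<^bsub>G2\<^esub> t \<otimes>\<^bsub>G2\<^esub> pg prm [^]\<^bsub>G2\<^esub> r =
      pg prm [^]\<^bsub>G2\<^esub> ((t + r) mod p)" for t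
    using g_closed G2.pow_mod_order[OF g_closed] by (simp add: G2.nat_pow_mult order_G2)
  have B_eq: "(\<lambda>j. if j \<in> free_set S \<union> {Spec} then Some (ph prm j [^] t \<otimes> the (B j)) else None)
      = (\<lambda>j. if j \<in> free_set S \<union> {Spec} then Some (ph prm j [^] ((t + r) mod p)) else None)" for t
    using matches_free_set_subset[OF assms] h_closed G1.pow_mod_order[OF h_closed]
    by (auto simp: B_def G1.nat_pow_mult order_G1 fun_eq_iff)
  show ?thesis
    unfolding KeyDer_def canonical_key_def key.case B_def[symmetric] k0_eq k1_eq B_eq ..
qed

lemma KeyDer_canonical_key:
  assumes "matches P S"
  shows "KeyDer p G1 G2 prm (canonical_key G1 G2 prm \<alpha> P r) S =
    map_pmf (canonical_key G1 G2 prm \<alpha> S) (pmf_of_set {..<p})"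
proof -
  have "KeyDer p G1 G2 prm (canonical_key G1 G2 prm \<alpha> P r) S =
      map_pmf (canonical_key G1 G2 prm \<alpha> S) (map_pmf (\<lambda>t. (t + r) mod p) (pmf_of_set {..<p}))"
    unfolding KeyDer_canonical_key_shift[OF assms] by (simp add: pmf.map_comp o_def)
  also have "map_pmf (\<lambda>t. (t + r) mod p) (pmf_of_set {..<p}) = pmf_of_set {..<p}"
    using p_pos by (intro map_pmf_of_set_bij_betw bij_betw_add_mod) auto
  finally show ?thesis .
qed

lemma KeyDer_well_formed:
  assumes "well_formed p G1 G2 prm \<alpha> k P" and "matches P S"
  shows "KeyDer p G1 G2 prm k S = map_pmf (canonical_key G1 G2 prm \<alpha> S) (pmf_of_set {..<p})"
  using assms(1)
  by (cases rule: well_formed_cases) (simp_all add: KeyDer_Master KeyDer_canonical_key assms(2))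

end

theorem theorem3:
  fixes G1 :: "('a, 'c) monoid_scheme" and G2 :: "('b, 'd) monoid_scheme"
    and prm :: "('a, 'b) params" and p l \<alpha> :: nat
    and S P1 P2 :: pattern and k1 k2 :: "('a, 'b) key"
  assumes "prime p"
    and "group G1" and "group G2"
    and "finite (carrier G1)" and "Coset.order G1 = p"
    and "finite (carrier G2)" and "Coset.order G2 = p"
    and "pg prm \<in> carrier G2"
    and "pg2 prm \<in> carrier G1" and "pg3 prm \<in> carrier G1"
    and "\<And>j. ph prm j \<in> carrier G1"
    and "\<alpha> < p"
    and "pg1 prm = pg prm [^]\<^bsub>G2\<^esub> \<alpha>"
    and "is_pattern p l S" and "is_pattern p l P1" and "is_pattern p l P2"
    and "matches P1 S" and "matches P2 S"
    and "well_formed p G1 G2 prm \<alpha> k1 P1"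
    and "well_formed p G1 G2 prm \<alpha> k2 P2"
  shows "KeyDer p G1 G2 prm k1 S = KeyDer p G1 G2 prm k2 S"
proof -
  have "comm_group G1"
    using assms(1,2,5) by (metis group.cyclic_imp_abelian_group group.prime_order_imp_cyclic)
  then interpret wkd_ibe_system G1 G2 prm p
    using assms(3-11) by (simp add: wkd_ibe_system_def wkd_ibe_system_axioms_def)
  show ?thesis
    using KeyDer_well_formed assms(17-20) by simp
qed

end
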